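(* Let $Q=(q_n)_{n\ge1}$ be a basic sequence that is infinite in limit. Then the set $\Theta_Q$ is perfect.
   Context: A basic sequence is a sequence $Q=(q_n)_{n\ge1}$ of integers with $q_n\ge 2$; it is infinite in limit if $q_n\to\infty$. $\mathbb{N}$ denotes the positive integers. For each positive integer $j$ let $\nu_j=\min\{N : q_m\ge 2j^2 \text{ for all } m\ge N\}$. Define $l_1=\max(\nu_2-1,1)$ and, recursively for $i\ge 2$, $l_i=\max\big(\min\{k\in\mathbb{N} : l_1+2l_2+\cdots+(i-1)l_{i-1}+ik\ge \nu_{i+1}-1\},1\big)$. Put $L_i=\sum_{j=1}^i jl_j$ (with $L_0=0$). Let $S_Q=\{(a,b,c)\in\mathbb{N}^3 : b\le l_a,\ c\le a\}$ and $\phi_Q(a,b,c)=L_{a-1}+(b-1)a+c$; $\phi_Q$ is a bijection $S_Q\to\mathbb{N}$. A $Q$-special sequence is a family of integers $F=(F_{(a,b,c)})_{(a,b,c)\in S_Q}$ with $F_{(a,b,1)}=0$ for all $(a,b,1)\in S_Q$ and $\frac{F_{(a,b,c)}}{q_{\phi_Q(a,b,c)}}\in\left[\frac{c-1}{a}-\frac{1}{2a^2},\frac{c-1}{a}+\frac{1}{2a^2}\right]$ for $(a,b,c)\in S_Q$ with $c>1$. Let $\Gamma_Q$ be the set of $Q$-special sequences. For $F\in\Gamma_Q$ put $E_{F,n}=F_{\phi_Q^{-1}(n)}$ and $x_F=\sum_{n=1}^\infty \frac{E_{F,n}}{q_1q_2\cdots q_n}$. Define $\Theta_Q=\{x_F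 : F\in\Gamma_Q\}\subseteq[0,1)$. *)

theory Defs
  imports "HOL-Analysis.Analysis"
begin

text \<open>Sequences are indexed from 1; the value at index 0 is irrelevant.\<close>

definition basic_sequence :: "(nat \<Rightarrow> nat) \<Rightarrow> bool" where
  "basic_sequence q \<longleftrightarrow> (\<forall>n\<ge>1. q n \<ge> 2)"

definition infinite_in_limit :: "(nat \<Rightarrow> nat) \<Rightarrow> bool" where
  "infinite_in_limit q \<longleftrightarrow> filterlim q at_top sequentially"

definition nuQ :: "(nat \<Rightarrow> nat) \<Rightarrow> nat \<Rightarrow> nat" where
  "nuQ q j = (LEAST N. N \<ge> 1 \<and> (\<forall>m\<ge>N. q m \<ge> 2 * j^2))"

text \<open>l_i given L_{i-1} = l_1 + 2 l_2 + ... + (i-1) l_{i-1}.\<close>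
definition lstep :: "(nat \<Rightarrow> nat) \<Rightarrow> nat \<Rightarrow> nat \<Rightarrow> nat" where
  "lstep q i Lprev = (if i = 1 then max (nuQ q 2 - 1) 1
     else max (LEAST k. k \<ge> 1 \<and> Lprev + i * k \<ge> nuQ q (i + 1) - 1) 1)"

primrec LQ :: "(nat \<Rightarrow> nat) \<Rightarrow> nat \<Rightarrow> nat" where
  "LQ q 0 = 0"
| "LQ q (Suc i) = LQ q i + Suc i * lstep q (Suc i) (LQ q i)"

definition lQ :: "(nat \<Rightarrow> nat) \<Rightarrow> nat \<Rightarrow> nat" where
  "lQ q i = lstep q i (LQ q (i - 1))"

definition SQ :: "(nat \<Rightarrow> nat) \<Rightarrow> (nat \<times> nat \<times> nat) set" where
  "SQ q = {(a, b, c). a \<ge> 1 \<and> b \<ge> 1 \<and> c \<ge> 1 \<and> b \<le> lQ q a \<and> c \<le> a}"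

definition phiQ :: "(nat \<Rightarrow> nat) \<Rightarrow> nat \<times> nat \<times> nat \<Rightarrow> nat" where
  "phiQ q t = (case t of (a, b, c) \<Rightarrow> LQ q (a - 1) + (b - 1) * a + c)"

definition special_seq :: "(nat \<Rightarrow> nat) \<Rightarrow> (nat \<times> nat \<times> nat \<Rightarrow> int) \<Rightarrow> bool" where
  "special_seq q F \<longleftrightarrow>
     (\<forall>(a, b, c) \<in> SQ q. c = 1 \<longrightarrow> F (a, b, c) = 0) \<and>
     (\<forall>(a, b, c) \<in> SQ q. c > 1 \<longrightarrow>
        of_int (F (a, b, c)) / real (q (phiQ q (a, b, c)))
          \<in> {(real c - 1) / real a - 1 / (2 * real a ^ 2) ..
             (real c - 1) / real a + 1 / (2 * real a ^ 2)})"

definition GammaQ :: "(nat \<Rightarrow> nat) \<Rightarrow> (nat \<times> nat \<times> nat \<Rightarrow> int) set" where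
  "GammaQ q = {F. special_seq q F}"

definition EQ :: "(nat \<Rightarrow> nat) \<Rightarrow> (nat \<times> nat \<times> nat \<Rightarrow> int) \<Rightarrow> nat \<Rightarrow> int" where
  "EQ q F n = F (inv_into (SQ q) (phiQ q) n)"

definition xQ :: "(nat \<Rightarrow> nat) \<Rightarrow> (nat \<times> nat \<times> nat \<Rightarrow> int) \<Rightarrow> real" where
  "xQ q F = (\<Sum>n. of_int (EQ q F (Suc n)) / (\<Prod>k\<in>{1..Suc n}. real (q k)))"

definition ThetaQ :: "(nat \<Rightarrow> nat) \<Rightarrow> real set" where
  "ThetaQ q = xQ q ` GammaQ q"

definition perfect_set :: "'a::topological_space set \<Rightarrow> bool" where
  "perfect_set S \<longleftrightarrow> closed S \<and> (\<forall>x\<in>S. x islimpt S)"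

end

theory Submission
  imports Defs
begin

text \<open>
  Every element of Theta_Q is the sum of a Cantor series sum_n E_n / (q_1 \<cdots> q_n) whose
  digit E_n ranges over a finite set D_n \<subseteq> {0..q_n}, independently for each n. On the compact
  product of the D_n the series is a uniform limit of continuous functions, so Theta_Q is
  compact, hence closed. Changing a single digit at position n moves the sum by a nonzero
  amount of at most 1 / (q_1 \<cdots> q_(n-1)) \<le> 2^(1-n); hence every point is a limit point as soon
  as infinitely many D_n contain two digits. For a \<ge> 2 the position n = phi_Q(a,1,2) lies
  beyond nu_a, so q_n \<ge> 2a^2, and the admissible window for E_n / q_n has length 1/a^2: it
  contains two multiples of 1/q_n.
\<close>

section \<open>Cantor series with digits from finite sets\<close>

definition cantor_prod :: "(nat \<Rightarrow> nat) \<Rightarrow> nat \<Rightarrow> real" where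
  "cantor_prod q m = (\<Prod>k\<in>{1..m}. real (q k))"

definition cantor_series :: "(nat \<Rightarrow> nat) \<Rightarrow> (nat \<Rightarrow> real) \<Rightarrow> real" where
  "cantor_series q f = (\<Sum>n. f (Suc n) / cantor_prod q (Suc n))"

lemma cantor_prod_Suc: "cantor_prod q (Suc m) = cantor_prod q m * real (q (Suc m))"
  unfolding cantor_prod_def by (simp add: prod.nat_ivl_Suc')

lemma basic_sequenceD: "basic_sequence q \<Longrightarrow> 1 \<le> n \<Longrightarrow> 2 \<le> q n"
  by (simp add: basic_sequence_def)

lemma cantor_prod_ge_power:
  assumes "basic_sequence q"
  shows "2 ^ m \<le> cantor_prod q m"
proof (induction m)
  case (Suc m)
  have "2 ^ m * 2 \<le> cantor_prod q m * real (q (Suc m))"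
    using Suc basic_sequenceD[OF assms, of "Suc m"]
    by (intro mult_mono) (auto intro: order_trans[OF zero_le_power Suc.IH])
  then show ?case by (simp add: cantor_prod_Suc mult.commute)
qed (simp add: cantor_prod_def)

lemma cantor_prod_pos: "basic_sequence q \<Longrightarrow> 0 < cantor_prod q m"
  by (rule less_le_trans[OF _ cantor_prod_ge_power]) simp_all

lemma digit_weight_le:
  assumes q: "basic_sequence q" and x: "\<bar>x\<bar> \<le> real (q (Suc i))"
  shows "\<bar>x / cantor_prod q (Suc i)\<bar> \<le> (1/2) ^ i"
proof -
  have P: "0 < cantor_prod q i" by (rule cantor_prod_pos[OF q])
  have Q: "0 < real (q (Suc i))" using basic_sequenceD[OF q, of "Suc i"] by simp
  have "\<bar>x / cantor_prod q (Suc i)\<bar> = \<bar>x\<bar> / (cantor_prod q i * real (q (Suc i)))"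
    using P Q by (simp add: cantor_prod_Suc)
  also have "\<dots> \<le> real (q (Suc i)) / (cantor_prod q i * real (q (Suc i)))"
    using x P Q by (intro divide_right_mono) auto
  also have "\<dots> = 1 / cantor_prod q i" using Q by simp
  also have "\<dots> \<le> 1 / 2 ^ i"
    using cantor_prod_ge_power[OF q, of i] P by (intro divide_left_mono) auto
  finally show ?thesis by (simp add: power_divide)
qed

lemma summable_cantor_series:
  assumes "basic_sequence q" and "\<And>n. \<bar>f n\<bar> \<le> real (q n)"
  shows "summable (\<lambda>n. f (Suc n) / cantor_prod q (Suc n))"
  using digit_weight_le[OF assms]
  by (intro summable_comparison_test[OF _ summable_geometric[of "1/2"]]) auto

lemma cantor_series_fun_upd:
  assumes q: "basic_sequence q" and f: "\<And>k. \<bar>f k\<bar> \<le> real (q k)"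
    and x: "\<bar>x\<bar> \<le> real (q n)" and n: "1 \<le> n"
  shows "cantor_series q (f(n := x)) - cantor_series q f = (x - f n) / cantor_prod q n"
proof -
  obtain m where m: "n = Suc m" using n by (cases n) auto
  define g where "g = f(n := x)"
  have g: "\<bar>g k\<bar> \<le> real (q k)" for k using f x by (simp add: g_def)
  have "(\<lambda>i. g (Suc i) / cantor_prod q (Suc i) - f (Suc i) / cantor_prod q (Suc i))
        sums (cantor_series q g - cantor_series q f)"
    unfolding cantor_series_def
    by (intro sums_diff summable_sums summable_cantor_series[OF q f] summable_cantor_series[OF q g])
  moreover have "(\<lambda>i. g (Suc i) / cantor_prod q (Suc i) - f (Suc i) / cantor_prod q (Suc i))
        = (\<lambda>i. if i = m then (x - f n) / cantor_prod q n else 0)"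
    by (simp add: g_def m diff_divide_distrib fun_eq_iff)
  ultimately have "(\<lambda>i. if i = m then (x - f n) / cantor_prod q n else 0)
        sums (cantor_series q g - cantor_series q f)" by simp
  from sums_unique2[OF this sums_single] show ?thesis by (simp add: g_def)
qed

lemma continuous_on_cantor_series:
  assumes q: "basic_sequence q" and A: "\<And>f n. f \<in> A \<Longrightarrow> \<bar>f n\<bar> \<le> real (q n)"
  shows "continuous_on A (cantor_series q)"
proof -
  have "uniform_limit A (\<lambda>n f. \<Sum>i<n. f (Suc i) / cantor_prod q (Suc i)) (cantor_series q) sequentially"
    unfolding cantor_series_def
    by (rule Weierstrass_m_test[OF _ summable_geometric[of "1/2"]])
       (use digit_weight_le[OF q] A in auto)
  moreover have "continuous_on A (\<lambda>f. \<Sum>i<n. f (Suc i) / cantor_prod q (Suc i))" for n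
    using cantor_prod_pos[OF q]
    by (intro continuous_intros continuous_on_subset[OF continuous_on_product_coordinates])
       (auto simp: less_imp_neq[symmetric])
  ultimately show ?thesis by (intro uniform_limit_theorem always_eventually) auto
qed

lemma compact_cantor_series_image:
  assumes q: "basic_sequence q" and "\<And>n. finite (D n)"
    and D: "\<And>n x. x \<in> D n \<Longrightarrow> \<bar>x\<bar> \<le> real (q n)"
  shows "compact (cantor_series q ` Pi UNIV D)"
proof (rule compact_continuous_image)
  show "continuous_on (Pi UNIV D) (cantor_series q)"
    using D by (intro continuous_on_cantor_series[OF q]) auto
  have "compactin (product_topology (\<lambda>_. euclidean) UNIV) (PiE UNIV D)"
    using assms(2) by (auto simp: compactin_PiE intro: finite_imp_compact)
  then show "compact (Pi UNIV D)"
    by (simp add: euclidean_product_topology PiE_UNIV_domain)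
qed

lemma cantor_series_islimpt:
  assumes q: "basic_sequence q" and D: "\<And>n. D n \<subseteq> {0..real (q n)}"
    and two: "infinite {n. \<exists>x\<in>D n. \<exists>y\<in>D n. x \<noteq> y}" and f: "f \<in> Pi UNIV D"
  shows "cantor_series q f islimpt cantor_series q ` Pi UNIV D"
proof (rule islimpt_approachable[THEN iffD2], intro allI impI)
  fix e :: real assume "0 < e"
  then obtain N where N: "(1/2::real) ^ N < e" using real_arch_pow_inv by force
  obtain n x y where n: "Suc N \<le> n" and xy: "x \<in> D n" "y \<in> D n" "x \<noteq> y"
    using two unfolding infinite_nat_iff_unbounded_le by blast
  then obtain z where z: "z \<in> D n" "z \<noteq> f n" by metis
  obtain m where m: "n = Suc m" "N \<le> m" using n by (cases n) auto
  have bound: "0 \<le> u \<and> u \<le> real (q k)" if "u \<in> D k" for u k using D[of k] that by auto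
  have fk: "f k \<in> D k" for k using f by auto
  have fb: "\<bar>f k\<bar> \<le> real (q k)" for k using bound[OF fk] by auto
  have "\<bar>z - f n\<bar> \<le> real (q (Suc m))" using bound[OF z(1)] bound[OF fk[of n]] m by auto
  then have "\<bar>(z - f n) / cantor_prod q n\<bar> \<le> (1/2) ^ m"
    unfolding m(1) by (rule digit_weight_le[OF q])
  also have "\<dots> \<le> (1/2) ^ N" using m(2) by (intro power_decreasing) auto
  finally have close: "\<bar>(z - f n) / cantor_prod q n\<bar> < e" using N by simp
  have diff: "cantor_series q (f(n := z)) - cantor_series q f = (z - f n) / cantor_prod q n"
    using n bound[OF z(1)] by (intro cantor_series_fun_upd q fb) auto
  show "\<exists>x'\<in>cantor_series q ` Pi UNIV D. x' \<noteq> cantor_series q f \<and> dist x' (cantor_series q f) < e"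
  proof (intro bexI conjI)
    show "cantor_series q (f(n := z)) \<noteq> cantor_series q f"
      using diff z(2) cantor_prod_pos[OF q, of n] by auto
    show "dist (cantor_series q (f(n := z))) (cantor_series q f) < e"
      using diff close by (simp add: dist_real_def)
    show "cantor_series q (f(n := z)) \<in> cantor_series q ` Pi UNIV D"
      using fk z(1) by (intro imageI) auto
  qed
qed

lemma perfect_set_cantor_series_image:
  assumes q: "basic_sequence q" and "\<And>n. finite (D n)" and D: "\<And>n. D n \<subseteq> {0..real (q n)}"
    and "infinite {n. \<exists>x\<in>D n. \<exists>y\<in>D n. x \<noteq> y}"
  shows "perfect_set (cantor_series q ` Pi UNIV D)"
  unfolding perfect_set_def
proof
  have "\<And>n x. x \<in> D n \<Longrightarrow> \<bar>x\<bar> \<le> real (q n)" using D by fastforce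
  then show "closed (cantor_series q ` Pi UNIV D)"
    by (intro compact_imp_closed compact_cantor_series_image q assms(2))
  show "\<forall>x\<in>cantor_series q ` Pi UNIV D. x islimpt cantor_series q ` Pi UNIV D"
    using cantor_series_islimpt[OF q D assms(4)] by blast
qed

section \<open>The enumeration \<open>\<phi>\<^sub>Q\<close>\<close>

lemma lstep_ge_1: "1 \<le> lstep q i L"
  unfolding lstep_def by auto

lemma LQ_Suc_lQ: "LQ q (Suc i) = LQ q i + Suc i * lQ q (Suc i)"
  by (simp add: lQ_def)

lemma LQ_mono: "i \<le> j \<Longrightarrow> LQ q i \<le> LQ q j"
  by (induction j) (auto simp: le_Suc_eq)

lemma LQ_ge: "i \<le> LQ q i"
proof (induction i)
  case (Suc i)
  have "1 \<le> Suc i * lstep q (Suc i) (LQ q i)"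
    using lstep_ge_1[of q "Suc i" "LQ q i"] by (simp add: one_le_mult_iff)
  with Suc show ?case by simp
qed simp

lemma phiQ_bounds:
  assumes "(a, b, c) \<in> SQ q"
  shows "LQ q (a - 1) < phiQ q (a, b, c)" and "phiQ q (a, b, c) \<le> LQ q a"
proof -
  from assms have t: "1 \<le> a" "1 \<le> b" "1 \<le> c" "b \<le> lQ q a" "c \<le> a" by (auto simp: SQ_def)
  show "LQ q (a - 1) < phiQ q (a, b, c)" using t by (simp add: phiQ_def)
  obtain i where i: "a = Suc i" using t by (cases a) auto
  have "(b - 1) * a + c \<le> (lQ q a - 1) * a + a" using t by (intro add_mono mult_right_mono) auto
  also have "\<dots> = lQ q a * a" using t by (cases "lQ q a") auto
  finally show "phiQ q (a, b, c) \<le> LQ q a" using i LQ_Suc_lQ[of q i] by (simp add: phiQ_def mult.commute)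
qed

lemma phiQ_less_of_less:
  assumes "(a, b, c) \<in> SQ q" and "(a', b', c') \<in> SQ q" and "a < a'"
  shows "phiQ q (a, b, c) < phiQ q (a', b', c')"
proof -
  have "phiQ q (a, b, c) \<le> LQ q a" using phiQ_bounds(2)[OF assms(1)] .
  also have "\<dots> \<le> LQ q (a' - 1)" using assms(3) by (intro LQ_mono) auto
  also have "\<dots> < phiQ q (a', b', c')" using phiQ_bounds(1)[OF assms(2)] .
  finally show ?thesis .
qed

lemma mult_add_eq_mult_add_cancel:
  fixes x y r s a :: nat
  assumes eq: "x * a + r = y * a + s" and "r < a" "s < a"
  shows "x = y" and "r = s"
proof -
  have "x = (x * a + r) div a" and "r = (x * a + r) mod a" using assms(2) by simp_all
  moreover have "y = (y * a + s) div a" and "s = (y * a + s) mod a" using assms(3) by simp_all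
  ultimately show "x = y" and "r = s" using eq by metis+
qed

lemma inj_on_phiQ: "inj_on (phiQ q) (SQ q)"
proof (rule inj_onI)
  fix t t' assume t: "t \<in> SQ q" and t': "t' \<in> SQ q" and eq: "phiQ q t = phiQ q t'"
  obtain a b c a' b' c' where tt: "t = (a, b, c)" "t' = (a', b', c')" by (cases t, cases t')
  have a: "a = a'"
  proof (cases a a' rule: linorder_cases)
    case less
    then show ?thesis using phiQ_less_of_less[OF t[unfolded tt(1)] t'[unfolded tt(2)]] eq tt by simp
  next
    case greater
    then show ?thesis using phiQ_less_of_less[OF t'[unfolded tt(2)] t[unfolded tt(1)]] eq tt by simp
  qed
  from t t' have bc: "1 \<le> b" "1 \<le> b'" "1 \<le> c" "1 \<le> c'" "c \<le> a" "c' \<le> a"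
    unfolding tt a by (auto simp: SQ_def)
  from eq have sum_eq: "(b - 1) * a + (c - 1) = (b' - 1) * a + (c' - 1)"
    using bc unfolding tt a by (simp add: phiQ_def)
  have "c - 1 < a" "c' - 1 < a" using bc by auto
  from mult_add_eq_mult_add_cancel[OF sum_eq this] have "b = b'" "c = c'" using bc by linarith+
  then show "t = t'" unfolding tt a by simp
qed

lemma phiQ_surj:
  assumes n: "1 \<le> n"
  shows "n \<in> phiQ q ` SQ q"
proof -
  have "\<exists>a. n \<le> LQ q a" using LQ_ge by blast
  define a where "a = (LEAST a. n \<le> LQ q a)"
  have a1: "n \<le> LQ q a" unfolding a_def by (rule LeastI_ex) fact
  have "a \<noteq> 0" using a1 n by (intro notI) simp
  then obtain i where i: "a = Suc i" by (cases a) auto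
  have a2: "LQ q i < n"
    using not_less_Least[of i "\<lambda>a. n \<le> LQ q a"] unfolding a_def[symmetric] i by auto
  define r where "r = n - LQ q i - 1"
  have "r < a * lQ q a" using a1 a2 LQ_Suc_lQ[of q i] unfolding r_def i by simp
  then have "r div a < lQ q a" using i by (simp add: div_less_iff_less_mult mult.commute)
  moreover have "Suc (r mod a) \<le> a" using i by (simp add: Suc_leI)
  ultimately have "(a, r div a + 1, r mod a + 1) \<in> SQ q" by (simp add: SQ_def)
  moreover have "phiQ q (a, r div a + 1, r mod a + 1) = LQ q i + (r div a * a + r mod a) + 1"
    unfolding phiQ_def i by simp
  moreover have "LQ q i + (r div a * a + r mod a) + 1 = n"
    using a2 unfolding div_mult_mod_eq r_def by simp
  ultimately show ?thesis by (metis image_eqI)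
qed

lemma bij_betw_phiQ: "bij_betw (phiQ q) (SQ q) {1..}"
  unfolding bij_betw_def
proof
  show "phiQ q ` SQ q = {1..}"
    using phiQ_bounds(1) phiQ_surj by fastforce
qed (rule inj_on_phiQ)

lemma q_ge_of_nuQ_le:
  assumes "infinite_in_limit q" and "nuQ q j \<le> m"
  shows "2 * j ^ 2 \<le> q m"
proof -
  obtain N where "\<forall>m\<ge>N. 2 * j ^ 2 \<le> q m"
    using assms(1) unfolding infinite_in_limit_def filterlim_at_top eventually_sequentially by blast
  then have "\<exists>N. N \<ge> 1 \<and> (\<forall>m\<ge>N. 2 * j ^ 2 \<le> q m)" by (intro exI[of _ "max N 1"]) auto
  from LeastI_ex[OF this] show ?thesis using assms(2) unfolding nuQ_def by blast
qed

lemma nuQ_Suc_le_LQ: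
  assumes "1 \<le> i"
  shows "nuQ q (Suc i) - 1 \<le> LQ q i"
proof (cases "i = 1")
  case True
  then show ?thesis by (simp add: lstep_def numeral_2_eq_2)
next
  case False
  then obtain j where j: "i = Suc j" "1 \<le> j" using assms by (cases i) auto
  define P where "P k \<longleftrightarrow> 1 \<le> k \<and> nuQ q (Suc i) - 1 \<le> LQ q j + i * k" for k
  have "P (max 1 (nuQ q (Suc i)))"
    unfolding P_def by (simp add: j trans_le_add2 max.coboundedI2)
  then have "P (LEAST k. P k)" by (rule LeastI)
  moreover have "lstep q i (LQ q j) = max (LEAST k. P k) 1"
    unfolding lstep_def P_def using j by simp
  ultimately show ?thesis
    using j mult_le_mono2[of "LEAST k. P k" "max (LEAST k. P k) 1" i] by (auto simp: P_def)
qed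

lemma q_phiQ_ge:
  assumes "infinite_in_limit q" and "2 \<le> a"
  shows "2 * a ^ 2 \<le> q (phiQ q (a, 1, 2))"
proof (rule q_ge_of_nuQ_le[OF assms(1)])
  have "nuQ q (Suc (a - 1)) - 1 \<le> LQ q (a - 1)" using assms(2) by (intro nuQ_Suc_le_LQ) auto
  then show "nuQ q a \<le> phiQ q (a, 1, 2)" using assms(2) by (simp add: phiQ_def)
qed

section \<open>Special sequences as digit choices\<close>

definition admissible_digit :: "(nat \<Rightarrow> nat) \<Rightarrow> nat \<times> nat \<times> nat \<Rightarrow> int \<Rightarrow> bool" where
  "admissible_digit q t k \<longleftrightarrow> (case t of (a, b, c) \<Rightarrow> (c = 1 \<longrightarrow> k = 0) \<and> (1 < c \<longrightarrow>
     of_int k / real (q (phiQ q (a, b, c)))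
       \<in> {(real c - 1) / real a - 1 / (2 * real a ^ 2) .. (real c - 1) / real a + 1 / (2 * real a ^ 2)}))"

lemma special_seq_iff_admissible: "special_seq q F \<longleftrightarrow> (\<forall>t\<in>SQ q. admissible_digit q t (F t))"
  unfolding special_seq_def admissible_digit_def by (auto split: prod.splits)

lemma admissible_window_subset:
  fixes a c :: real
  assumes "1 \<le> a" and "2 \<le> c" and "c \<le> a"
  shows "{(c - 1) / a - 1 / (2 * a ^ 2) .. (c - 1) / a + 1 / (2 * a ^ 2)} \<subseteq> {0..1}"
proof -
  have "1 / (2 * a ^ 2) \<le> 1 / a" using assms by (simp add: field_simps power2_eq_square)
  moreover have "1 / a \<le> (c - 1) / a" and "(c - 1) / a + 1 / a \<le> 1"
    using assms by (simp_all add: divide_right_mono field_simps)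
  ultimately show ?thesis by auto
qed

lemma admissible_digit_bounds:
  assumes q: "basic_sequence q" and t: "t \<in> SQ q" and k: "admissible_digit q t k"
  shows "0 \<le> k \<and> k \<le> int (q (phiQ q t))"
proof -
  obtain a b c where tt: "t = (a, b, c)" by (cases t)
  from t have abc: "1 \<le> a" "1 \<le> c" "c \<le> a" by (auto simp: SQ_def tt)
  show ?thesis
  proof (cases "c = 1")
    case True
    then show ?thesis using k by (simp add: admissible_digit_def tt)
  next
    case False
    define Q where "Q = real (q (phiQ q t))"
    have "2 \<le> q (phiQ q t)" using abc by (intro basic_sequenceD[OF q]) (simp add: tt phiQ_def)
    then have Q: "0 < Q" by (simp add: Q_def)
    have "of_int k / Q \<in> {0..1}"
      using k False abc admissible_window_subset[of "real a" "real c"]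
      by (auto simp: admissible_digit_def tt Q_def)
    then show ?thesis using Q by (simp add: Q_def field_simps)
  qed
qed

lemma two_int_multiples_in_window:
  fixes Q c r :: real
  assumes "0 < Q" and "1 \<le> r * Q"
  shows "\<exists>k k' :: int. k \<noteq> k' \<and> of_int k / Q \<in> {c - r..c + r} \<and> of_int k' / Q \<in> {c - r..c + r}"
proof -
  define lo where "lo = Q * (c - r)"
  have window: "of_int k / Q \<in> {c - r..c + r}" if "lo \<le> of_int k" "of_int k \<le> lo + 2" for k :: int
  proof -
    have "of_int k \<le> Q * (c + r)" using that assms(2) by (simp add: lo_def algebra_simps)
    then show ?thesis using that assms(1) by (simp add: lo_def field_simps)
  qed
  have "of_int (\<lfloor>lo\<rfloor> + 1) / Q \<in> {c - r..c + r}" "of_int (\<lfloor>lo\<rfloor> + 2) / Q \<in> {c - r..c + r}"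
    by (rule window; simp; linarith)+
  then show ?thesis by (intro exI[of _ "\<lfloor>lo\<rfloor> + 1"] exI[of _ "\<lfloor>lo\<rfloor> + 2"]) simp
qed

lemma two_admissible_digits:
  assumes "infinite_in_limit q" and a: "2 \<le> a"
  shows "\<exists>k k'. k \<noteq> k' \<and> admissible_digit q (a, 1, 2) k \<and> admissible_digit q (a, 1, 2) k'"
proof -
  define Q where "Q = real (q (phiQ q (a, 1, 2)))"
  have "2 * real a ^ 2 \<le> Q"
    unfolding Q_def using q_phiQ_ge[OF assms] by (metis of_nat_le_iff of_nat_mult of_nat_numeral of_nat_power)
  moreover have "0 < 2 * real a ^ 2" using a by simp
  ultimately have "0 < Q" and "1 \<le> 1 / (2 * real a ^ 2) * Q" by (linarith, simp add: field_simps)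
  from two_int_multiples_in_window[OF this, of "(real 2 - 1) / real a"] show ?thesis
    by (simp add: admissible_digit_def Q_def)
qed

definition digit_set :: "(nat \<Rightarrow> nat) \<Rightarrow> nat \<Rightarrow> real set" where
  "digit_set q n = (if n = 0 then {0}
     else real_of_int ` {k. admissible_digit q (inv_into (SQ q) (phiQ q) n) k})"

lemma inv_into_phiQ: "1 \<le> n \<Longrightarrow> inv_into (SQ q) (phiQ q) n \<in> SQ q"
  and phiQ_inv_into: "1 \<le> n \<Longrightarrow> phiQ q (inv_into (SQ q) (phiQ q) n) = n"
  using bij_betw_phiQ[of q] by (auto intro: inv_into_into bij_betw_inv_into_right simp: bij_betw_def)

lemma digit_set_subset:
  assumes "basic_sequence q"
  shows "digit_set q n \<subseteq> real_of_int ` {0..int (q n)}"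
proof (cases "n = 0")
  case False
  then have "1 \<le> n" by simp
  with admissible_digit_bounds[OF assms inv_into_phiQ] phiQ_inv_into show ?thesis
    by (fastforce simp: digit_set_def)
qed (simp add: digit_set_def)

lemma infinite_two_digit_positions:
  assumes "infinite_in_limit q"
  shows "infinite {n. \<exists>x\<in>digit_set q n. \<exists>y\<in>digit_set q n. x \<noteq> y}"
  unfolding infinite_nat_iff_unbounded_le
proof
  fix m :: nat
  define a where "a = max m 2"
  have S: "(a, 1, 2) \<in> SQ q" using lstep_ge_1 by (auto simp: SQ_def lQ_def a_def)
  have n: "a \<le> phiQ q (a, 1, 2)" using LQ_ge[of "a - 1" q] by (simp add: phiQ_def a_def)
  have inv: "inv_into (SQ q) (phiQ q) (phiQ q (a, 1, 2)) = (a, 1, 2)"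
    by (rule bij_betw_inv_into_left[OF bij_betw_phiQ S])
  obtain k k' where "k \<noteq> k'" "admissible_digit q (a, 1, 2) k" "admissible_digit q (a, 1, 2) k'"
    using two_admissible_digits[OF assms, of a] by (auto simp: a_def)
  then have "phiQ q (a, 1, 2) \<in> {n. \<exists>x\<in>digit_set q n. \<exists>y\<in>digit_set q n. x \<noteq> y}"
    using n inv by (auto simp: digit_set_def a_def)
  then show "\<exists>n\<ge>m. n \<in> {n. \<exists>x\<in>digit_set q n. \<exists>y\<in>digit_set q n. x \<noteq> y}"
    using n by (intro exI[of _ "phiQ q (a, 1, 2)"]) (auto simp: a_def)
qed

lemma ThetaQ_eq_cantor_series_image:
  assumes q: "basic_sequence q"
  shows "ThetaQ q = cantor_series q ` Pi UNIV (digit_set q)"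
proof
  show "ThetaQ q \<subseteq> cantor_series q ` Pi UNIV (digit_set q)"
  proof
    fix x assume "x \<in> ThetaQ q"
    then obtain F where F: "special_seq q F" "x = xQ q F" by (auto simp: ThetaQ_def GammaQ_def)
    define f where "f n = (if n = 0 then 0 else real_of_int (EQ q F n))" for n
    have "f \<in> Pi UNIV (digit_set q)"
      using F(1) inv_into_phiQ by (auto simp: f_def digit_set_def EQ_def special_seq_iff_admissible)
    moreover have "x = cantor_series q f"
      by (simp add: F(2) xQ_def cantor_series_def cantor_prod_def f_def)
    ultimately show "x \<in> cantor_series q ` Pi UNIV (digit_set q)" by blast
  qed
next
  show "cantor_series q ` Pi UNIV (digit_set q) \<subseteq> ThetaQ q"
  proof
    fix x assume "x \<in> cantor_series q ` Pi UNIV (digit_set q)"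
    then obtain f where f: "f \<in> Pi UNIV (digit_set q)" "x = cantor_series q f" by blast
    define F where "F t = \<lfloor>f (phiQ q t)\<rfloor>" for t
    have int: "f n = of_int \<lfloor>f n\<rfloor>" for n
      using digit_set_subset[OF q, of n] f(1) by fastforce
    have "special_seq q F"
      unfolding special_seq_iff_admissible
    proof
      fix t assume t: "t \<in> SQ q"
      have n: "1 \<le> phiQ q t" using t by (auto simp: SQ_def phiQ_def)
      have "f (phiQ q t) \<in> digit_set q (phiQ q t)" using f(1) by blast
      moreover have "inv_into (SQ q) (phiQ q) (phiQ q t) = t"
        by (rule bij_betw_inv_into_left[OF bij_betw_phiQ t])
      ultimately obtain k where "f (phiQ q t) = of_int k" "admissible_digit q t k"
        using n by (auto simp: digit_set_def)
      then show "admissible_digit q t (F t)" by (simp add: F_def)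
    qed
    moreover have "EQ q F n = f n" if "1 \<le> n" for n
      using that int by (simp add: EQ_def F_def phiQ_inv_into)
    then have "xQ q F = x"
      by (simp add: f(2) xQ_def cantor_series_def cantor_prod_def)
    ultimately show "x \<in> ThetaQ q" unfolding ThetaQ_def GammaQ_def by blast
  qed
qed

theorem mainTheorem3:
  fixes q :: "nat \<Rightarrow> nat"
  assumes "basic_sequence q" and "infinite_in_limit q"
  shows "perfect_set (ThetaQ q)"
proof -
  have "finite (digit_set q n)" for n
    by (rule finite_subset[OF digit_set_subset[OF assms(1)]]) simp
  moreover have "digit_set q n \<subseteq> {0..real (q n)}" for n
    using digit_set_subset[OF assms(1), of n] by auto
  ultimately show ?thesis
    unfolding ThetaQ_eq_cantor_series_image[OF assms(1)]
    by (intro perfect_set_cantor_series_image assms(1) infinite_two_digit_positions assms(2))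
qed

end
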